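(* Let $R$ be an $F$-finite $F$-pure ring of prime characteristic $p$, let $\mathfrak a,J$ be ideals with $\mathfrak a\subseteq\sqrt J$, and let $\overline R=R/\mathcal P(J)$ with images $\overline{\mathfrak a},\overline J$. Then $\operatorname{ct}_J(\mathfrak a)\le\operatorname{ct}_{\overline J}(\overline{\mathfrak a})$. In particular, if $R$ is local (or standard graded) with (homogeneous) maximal ideal $\mathfrak m$ and $\overline R=R/\mathcal P(\mathfrak m)$, then $\operatorname{fpt}(\mathfrak a)\le\operatorname{fpt}(\overline{\mathfrak a})$.
   Context: $J_e=\{f\in R\mid \varphi(f^{1/p^e})\in J \text{ for all }\varphi\in\operatorname{Hom}_R(R^{1/p^e},R)\}$; $\mathcal P(J)=\bigcap_{s\in\mathbb N}J_s$ (Cartier core); $b^J_{\mathfrak a}(p^e)=\max\{t\in\mathbb N\mid\mathfrak a^t\not\subseteq J_e\}$ and $\operatorname{ct}_J(\mathfrak a)=\lim_{e\to\infty}b^J_{\mathfrak a}(p^e)/p^e$, with the analogous notions in $\overline R$; $\operatorname{fpt}(\mathfrak a)=\operatorname{ct}_{\mathfrak m}(\mathfrak a)$. *)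

theory Defs
  imports Complex_Main "HOL-Algebra.Algebra"
begin

text \<open>A p^{-e}-linear map \<phi> : R \<rightarrow> R is an element of
  Hom_R(R^{1/p^e}, R) written on R itself: \<phi>(f^{1/p^e}) corresponds to \<phi> f.\<close>

definition frob_linear :: "('a, 'b) ring_scheme \<Rightarrow> nat \<Rightarrow> nat \<Rightarrow> ('a \<Rightarrow> 'a) \<Rightarrow> bool" where
  "frob_linear R p e \<phi> \<longleftrightarrow>
     \<phi> \<in> carrier R \<rightarrow> carrier R \<and>
     (\<forall>x \<in> carrier R. \<forall>y \<in> carrier R. \<phi> (x \<oplus>\<^bsub>R\<^esub> y) = \<phi> x \<oplus>\<^bsub>R\<^esub> \<phi> y) \<and>
     (\<forall>r \<in> carrier R. \<forall>s \<in> carrier R.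
        \<phi> ((r [^]\<^bsub>R\<^esub> (p ^ e)) \<otimes>\<^bsub>R\<^esub> s) = r \<otimes>\<^bsub>R\<^esub> \<phi> s)"

definition frob_ideal :: "('a, 'b) ring_scheme \<Rightarrow> nat \<Rightarrow> 'a set \<Rightarrow> nat \<Rightarrow> 'a set" where
  "frob_ideal R p J e = {f \<in> carrier R. \<forall>\<phi>. frob_linear R p e \<phi> \<longrightarrow> \<phi> f \<in> J}"

definition cartier_core :: "('a, 'b) ring_scheme \<Rightarrow> nat \<Rightarrow> 'a set \<Rightarrow> 'a set" where
  "cartier_core R p J = (\<Inter>e. frob_ideal R p J e)"

fun ideal_power :: "('a, 'b) ring_scheme \<Rightarrow> 'a set \<Rightarrow> nat \<Rightarrow> 'a set" where
  "ideal_power R I 0 = carrier R"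
| "ideal_power R I (Suc n) = ideal_prod R I (ideal_power R I n)"

definition rad_ideal :: "('a, 'b) ring_scheme \<Rightarrow> 'a set \<Rightarrow> 'a set" where
  "rad_ideal R J = {x \<in> carrier R. \<exists>n::nat. x [^]\<^bsub>R\<^esub> n \<in> J}"

definition b_num :: "('a, 'b) ring_scheme \<Rightarrow> nat \<Rightarrow> 'a set \<Rightarrow> 'a set \<Rightarrow> nat \<Rightarrow> nat" where
  "b_num R p J a e = Max {t::nat. \<not> ideal_power R a t \<subseteq> frob_ideal R p J e}"

definition crit_thr :: "('a, 'b) ring_scheme \<Rightarrow> nat \<Rightarrow> 'a set \<Rightarrow> 'a set \<Rightarrow> real" where
  "crit_thr R p J a = lim (\<lambda>e. real (b_num R p J a e) / real p ^ e)"

definition fpt :: "('a, 'b) ring_scheme \<Rightarrow> nat \<Rightarrow> 'a set \<Rightarrow> 'a set \<Rightarrow> real" where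
  "fpt R p m a = crit_thr R p m a"

text \<open>F-finite: R is finitely generated as a module over R^p (i.e. F_*R is a finite R-module).\<close>
definition F_finite :: "('a, 'b) ring_scheme \<Rightarrow> nat \<Rightarrow> bool" where
  "F_finite R p \<longleftrightarrow> (\<exists>S \<subseteq> carrier R. finite S \<and>
     (\<forall>x \<in> carrier R. \<exists>c \<in> S \<rightarrow> carrier R.
        x = (\<Oplus>\<^bsub>R\<^esub> s \<in> S. (c s [^]\<^bsub>R\<^esub> p) \<otimes>\<^bsub>R\<^esub> s)))"

text \<open>F-pure; for F-finite rings this is equivalent to F-split, which is used here.\<close>
definition F_pure :: "('a, 'b) ring_scheme \<Rightarrow> nat \<Rightarrow> bool" where
  "F_pure R p \<longleftrightarrow> (\<exists>\<phi>. frob_linear R p 1 \<phi> \<and> \<phi> \<one>\<^bsub>R\<^esub> = \<one>\<^bsub>R\<^esub>)"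

definition quot_image :: "('a, 'b) ring_scheme \<Rightarrow> 'a set \<Rightarrow> 'a set \<Rightarrow> 'a set set" where
  "quot_image R P I = (\<lambda>x. a_r_coset R P x) ` I"

end

theory Submission
  imports Defs
begin

(* A p^-e-linear map phi (an element of Hom_R(R^(1/p^e), R)) composed with a p^-s-linear map is
  p^-(e+s)-linear, so the Cartier core P = P(J) is an ideal inside J that every such map sends into
  itself. Each phi therefore descends to R/P, and if phi(f) is outside J then the descended map sends
  the class of f outside the image of J. Hence f notin J_e gives (f mod P) notin Jbar_e, and
  b^J_a(p^e) <= b^Jbar_abar(p^e) for every e.
  Both sequences b(p^e)/p^e converge. A splitting psi (psi(1) = 1) recovers f from f^p, so
  p b(p^e) <= b(p^(e+1)). If a is generated by a finite set G with g^M in J for all g in G, then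
  g^(M p^e) is in J_e, and by pigeonhole a^(|G| M p^e + 1) is contained in J_e. The splitting descends
  to R/P, so both facts hold there as well, and the inequality passes to the limits. *)

lemma frob_linearD:
  assumes "frob_linear R p e \<phi>"
  shows frob_linear_closed: "\<And>x. x \<in> carrier R \<Longrightarrow> \<phi> x \<in> carrier R"
    and frob_linear_add: "\<And>x y. x \<in> carrier R \<Longrightarrow> y \<in> carrier R \<Longrightarrow>
        \<phi> (x \<oplus>\<^bsub>R\<^esub> y) = \<phi> x \<oplus>\<^bsub>R\<^esub> \<phi> y"
    and frob_linear_smult: "\<And>r s. r \<in> carrier R \<Longrightarrow> s \<in> carrier R \<Longrightarrow>
        \<phi> ((r [^]\<^bsub>R\<^esub> (p ^ e)) \<otimes>\<^bsub>R\<^esub> s) = r \<otimes>\<^bsub>R\<^esub> \<phi> s"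
  using assms unfolding frob_linear_def by auto

context cring
begin

lemma frob_linear_id: "frob_linear R p 0 id"
  unfolding frob_linear_def by auto

lemma frob_linear_comp:
  assumes \<chi>: "frob_linear R p s \<chi>" and \<phi>: "frob_linear R p e \<phi>"
  shows "frob_linear R p (e + s) (\<chi> \<circ> \<phi>)"
  unfolding frob_linear_def
proof (intro conjI ballI)
  show "\<chi> \<circ> \<phi> \<in> carrier R \<rightarrow> carrier R"
    using frob_linear_closed[OF \<chi>] frob_linear_closed[OF \<phi>] by auto
next
  fix x y assume "x \<in> carrier R" "y \<in> carrier R"
  then show "(\<chi> \<circ> \<phi>) (x \<oplus> y) = (\<chi> \<circ> \<phi>) x \<oplus> (\<chi> \<circ> \<phi>) y"
    by (simp add: frob_linear_add[OF \<chi>] frob_linear_add[OF \<phi>] frob_linear_closed[OF \<phi>])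
next
  fix r x assume r: "r \<in> carrier R" and x: "x \<in> carrier R"
  have "r [^] (p ^ (e + s)) = (r [^] (p ^ s)) [^] (p ^ e)"
    using r by (simp add: nat_pow_pow power_add mult.commute)
  then show "(\<chi> \<circ> \<phi>) (r [^] (p ^ (e + s)) \<otimes> x) = r \<otimes> (\<chi> \<circ> \<phi>) x"
    using r x by (simp add: frob_linear_smult[OF \<phi>] frob_linear_smult[OF \<chi>] frob_linear_closed[OF \<phi>])
qed

lemma frob_linear_funpow:
  assumes "frob_linear R p 1 \<psi>"
  shows "frob_linear R p e (\<psi> ^^ e)"
proof (induction e)
  case 0
  then show ?case using frob_linear_id by (simp add: id_def)
next
  case (Suc e)
  have "frob_linear R p (1 + e) ((\<psi> ^^ e) \<circ> \<psi>)"
    by (rule frob_linear_comp[OF Suc assms])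
  then show ?case by (simp only: funpow_Suc_right plus_1_eq_Suc)
qed

lemma frob_linear_premult:
  assumes \<phi>: "frob_linear R p e \<phi>" and r: "r \<in> carrier R"
  shows "frob_linear R p e (\<lambda>x. \<phi> (r \<otimes> x))"
  unfolding frob_linear_def
proof (intro conjI ballI)
  show "(\<lambda>x. \<phi> (r \<otimes> x)) \<in> carrier R \<rightarrow> carrier R"
    using frob_linear_closed[OF \<phi>] r by auto
next
  fix x y assume "x \<in> carrier R" "y \<in> carrier R"
  then show "\<phi> (r \<otimes> (x \<oplus> y)) = \<phi> (r \<otimes> x) \<oplus> \<phi> (r \<otimes> y)"
    using r by (simp add: r_distr frob_linear_add[OF \<phi>])
next
  fix u s assume "u \<in> carrier R" "s \<in> carrier R"
  moreover from this have "r \<otimes> (u [^] p ^ e \<otimes> s) = u [^] p ^ e \<otimes> (r \<otimes> s)"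
    using r by (simp add: m_lcomm)
  ultimately show "\<phi> (r \<otimes> (u [^] p ^ e \<otimes> s)) = u \<otimes> \<phi> (r \<otimes> s)"
    using r by (simp add: frob_linear_smult[OF \<phi>])
qed

lemma frob_linear_zero:
  assumes \<phi>: "frob_linear R p e \<phi>"
  shows "\<phi> \<zero> = \<zero>"
proof -
  have "\<phi> \<zero> \<oplus> \<phi> \<zero> = \<phi> \<zero> \<oplus> \<zero>"
    using frob_linear_add[OF \<phi>, of \<zero> \<zero>] frob_linear_closed[OF \<phi>, of \<zero>] by simp
  then show ?thesis
    using frob_linear_closed[OF \<phi>, of \<zero>] by (simp add: add.left_cancel)
qed

lemma frob_linear_minus:
  assumes \<phi>: "frob_linear R p e \<phi>" and x: "x \<in> carrier R"
  shows "\<phi> (\<ominus> x) = \<ominus> \<phi> x"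
proof -
  have "\<phi> (\<ominus> x) \<oplus> \<phi> x = \<zero>"
    using x frob_linear_add[OF \<phi>, of "\<ominus> x" x] frob_linear_zero[OF \<phi>] by (simp add: l_neg)
  then show ?thesis
    using x frob_linear_closed[OF \<phi>] minus_equality by simp
qed

lemma frob_ideal_ideal:
  assumes "ideal K R"
  shows "ideal (frob_ideal R p K e) R"
proof -
  interpret K: ideal K R by fact
  have "subgroup (frob_ideal R p K e) (add_monoid R)"
  proof (rule add.subgroupI)
    show "frob_ideal R p K e \<subseteq> carrier R"
      unfolding frob_ideal_def by auto
    show "frob_ideal R p K e \<noteq> {}"
      using frob_linear_zero unfolding frob_ideal_def by force
  next
    fix f assume "f \<in> frob_ideal R p K e"
    then show "\<ominus> f \<in> frob_ideal R p K e"
      unfolding frob_ideal_def by (simp add: frob_linear_minus)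
  next
    fix f g assume "f \<in> frob_ideal R p K e" "g \<in> frob_ideal R p K e"
    then show "f \<oplus> g \<in> frob_ideal R p K e"
      unfolding frob_ideal_def by (simp add: frob_linear_add)
  qed
  moreover have "r \<otimes> f \<in> frob_ideal R p K e" if "f \<in> frob_ideal R p K e" "r \<in> carrier R" for f r
    using that frob_linear_premult unfolding frob_ideal_def by fastforce
  ultimately show ?thesis
    by (intro idealI[OF ring_axioms]) (auto simp: frob_ideal_def m_comm)
qed

lemma frob_ideal_zero_subset: "frob_ideal R p K 0 \<subseteq> K"
  using frob_linear_id unfolding frob_ideal_def by fastforce

lemma nat_pow_mult_in_frob_ideal:
  assumes "ideal K R" and x: "x \<in> carrier R" "x [^] M \<in> K"
  shows "x [^] (M * p ^ e) \<in> frob_ideal R p K e"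
proof -
  have "\<phi> (x [^] (M * p ^ e)) \<in> K" if \<phi>: "frob_linear R p e \<phi>" for \<phi>
  proof -
    have "x [^] (M * p ^ e) = (x [^] M) [^] (p ^ e) \<otimes> \<one>"
      using x by (simp add: nat_pow_pow)
    then have "\<phi> (x [^] (M * p ^ e)) = x [^] M \<otimes> \<phi> \<one>"
      using x frob_linear_smult[OF \<phi>, of "x [^] M" \<one>] by simp
    then show ?thesis
      using x frob_linear_closed[OF \<phi>] ideal.I_r_closed[OF \<open>ideal K R\<close>] by simp
  qed
  then show ?thesis unfolding frob_ideal_def using x by auto
qed

lemma F_pure_one_notin_frob_ideal:
  assumes "F_pure R p" "\<one> \<notin> K"
  shows "\<one> \<notin> frob_ideal R p K e"
proof -
  obtain \<psi> where \<psi>: "frob_linear R p 1 \<psi>" "\<psi> \<one> = \<one>"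
    using \<open>F_pure R p\<close> unfolding F_pure_def by blast
  have "(\<psi> ^^ e) \<one> = \<one>" by (induction e) (simp_all add: \<psi>(2))
  then show ?thesis
    using frob_linear_funpow[OF \<psi>(1)] \<open>\<one> \<notin> K\<close> unfolding frob_ideal_def by force
qed

lemma F_pure_nat_pow_notin_frob_ideal:
  assumes "F_pure R p" and f: "f \<in> carrier R" "f \<notin> frob_ideal R p K e"
  shows "f [^] p \<notin> frob_ideal R p K (Suc e)"
proof
  assume fp: "f [^] p \<in> frob_ideal R p K (Suc e)"
  obtain \<psi> where \<psi>: "frob_linear R p 1 \<psi>" "\<psi> \<one> = \<one>"
    using \<open>F_pure R p\<close> unfolding F_pure_def by blast
  obtain \<phi> where \<phi>: "frob_linear R p e \<phi>" "\<phi> f \<notin> K"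
    using f unfolding frob_ideal_def by auto
  have "\<psi> (f [^] p) = f"
    using frob_linear_smult[OF \<psi>(1), of f \<one>] \<psi>(2) f(1) by simp
  moreover have "frob_linear R p (Suc e) (\<phi> \<circ> \<psi>)"
    using frob_linear_comp[OF \<phi>(1) \<psi>(1)] by simp
  ultimately have "\<phi> f \<in> K"
    using fp unfolding frob_ideal_def by force
  with \<phi>(2) show False by contradiction
qed

end

lemma frob_ideal_carrier: "frob_ideal R p (carrier R) e = carrier R"
  unfolding frob_ideal_def frob_linear_def by auto

lemma ideal_prod_mono:
  assumes "I \<subseteq> I'" "J \<subseteq> J'"
  shows "ideal_prod R I J \<subseteq> ideal_prod R I' J'"
proof
  fix x assume "x \<in> ideal_prod R I J"
  then show "x \<in> ideal_prod R I' J'"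
    by (induction x rule: ideal_prod.induct) (use assms in \<open>auto intro: ideal_prod.intros\<close>)
qed

lemma ideal_power_mono:
  assumes "A \<subseteq> B"
  shows "ideal_power R A t \<subseteq> ideal_power R B t"
  by (induction t) (simp_all add: ideal_prod_mono assms)

lemma set_add_mono:
  assumes "I \<subseteq> I'" "J \<subseteq> J'"
  shows "I <+>\<^bsub>R\<^esub> J \<subseteq> I' <+>\<^bsub>R\<^esub> J'"
  using assms unfolding set_add_def' by blast

lemma ideal_power_ring_hom:
  assumes "ring R" "h \<in> ring_hom R S" "ideal A R"
  shows "x \<in> ideal_power R A t \<Longrightarrow> h x \<in> ideal_power S (h ` A) t"
proof (induction t arbitrary: x)
  case 0
  then show ?case using ring_hom_closed[OF assms(2)] by simp
next
  case (Suc t)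
  interpret ring R by fact
  have A_t: "ideal (ideal_power R A t) R"
    by (induction t) (simp_all add: oneideal ideal_prod_is_ideal assms(3))
  from Suc.prems have "x \<in> ideal_prod R A (ideal_power R A t)" by simp
  then show ?case
  proof (induction x rule: ideal_prod.induct)
    case (prod i j)
    then have "i \<in> carrier R" "j \<in> carrier R"
      using ideal.Icarr[OF assms(3)] ideal.Icarr[OF A_t] by auto
    then show ?case
      using prod Suc.IH by (simp add: ring_hom_mult[OF assms(2)] ideal_prod.prod)
  next
    case (sum s1 s2)
    then have "s1 \<in> carrier R" "s2 \<in> carrier R"
      using ideal_prod_in_carrier[OF assms(3) A_t] by auto
    then show ?case
      using sum by (simp add: ring_hom_add[OF assms(2)] ideal_prod.sum)
  qed
qed

context ring
begin

lemma set_add_ideals_subset: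
  assumes "ideal I R" "ideal J R" "ideal K R" "I \<subseteq> K" "J \<subseteq> K"
  shows "I <+>\<^bsub>R\<^esub> J \<subseteq> K"
  using union_genideal[OF assms(1,2)] genideal_minimal[OF assms(3), of "I \<union> J"] assms(4,5)
  by simp

lemma subset_set_add_ideals:
  assumes "ideal I R" "ideal J R"
  shows "I \<subseteq> I <+>\<^bsub>R\<^esub> J" and "J \<subseteq> I <+>\<^bsub>R\<^esub> J"
  using union_genideal[OF assms] genideal_self[of "I \<union> J"] ideal.Icarr[OF assms(1)]
    ideal.Icarr[OF assms(2)] by auto

end

context cring
begin

lemma ideal_power_ideal:
  assumes "ideal A R"
  shows "ideal (ideal_power R A t) R"
  by (induction t) (simp_all add: oneideal ideal_prod_is_ideal assms)

lemma ideal_power_antimono: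
  assumes "ideal A R" "s \<le> t"
  shows "ideal_power R A t \<subseteq> ideal_power R A s"
  using assms(2)
proof (induction t rule: dec_induct)
  case (step t)
  then show ?case
    using ideal_prod_inter[OF assms(1) ideal_power_ideal[OF assms(1), of t]] by auto
qed simp

lemma ideal_power_add:
  assumes "ideal A R"
  shows "ideal_power R A (s + t) = ideal_prod R (ideal_power R A s) (ideal_power R A t)"
proof (induction s)
  case 0
  show ?case
    using ideal_prod_one[OF ideal_power_ideal[OF assms]] 
      ideal_prod_commute[OF oneideal ideal_power_ideal[OF assms]] by simp
next
  case (Suc s)
  then show ?case
    using ideal_prod_assoc[OF assms ideal_power_ideal[OF assms] ideal_power_ideal[OF assms]] by simp
qed

lemma nat_pow_in_ideal_power:
  assumes "ideal A R" "x \<in> ideal_power R A t"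
  shows "x [^] n \<in> ideal_power R A (n * t)"
proof (induction n)
  case 0
  then show ?case by simp
next
  case (Suc n)
  then have "x [^] n \<otimes> x \<in> ideal_power R A (n * t + t)"
    using ideal_power_add[OF assms(1)] assms(2) by (simp add: ideal_prod.prod)
  then show ?case by (simp add: add.commute)
qed

lemma ideal_power_set_add_subset:
  assumes A: "ideal A R" and B: "ideal B R"
  shows "ideal_power R (A <+>\<^bsub>R\<^esub> B) (s + t) \<subseteq> ideal_power R A s <+>\<^bsub>R\<^esub> ideal_power R B t"
proof (induction "s + t" arbitrary: s t)
  case 0
  then show ?case using subset_set_add_ideals(1)[OF oneideal oneideal] by simp
next
  case (Suc n)
  let ?T = "ideal_power R A s <+>\<^bsub>R\<^esub> ideal_power R B t"
  have T: "ideal ?T R" by (intro add_ideals ideal_power_ideal A B)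
  show ?case
  proof (cases "s = 0 \<or> t = 0")
    case True
    then have "carrier R \<subseteq> ?T"
      using subset_set_add_ideals[OF ideal_power_ideal[OF A, of s] ideal_power_ideal[OF B, of t]]
      by auto
    then show ?thesis
      using ideal.Icarr[OF ideal_power_ideal[OF add_ideals[OF A B]]] by blast
  next
    case False
    then obtain s' t' where s: "s = Suc s'" and t: "t = Suc t'"
      by (meson not0_implies_Suc)
    let ?X = "ideal_power R (A <+>\<^bsub>R\<^esub> B) n"
    have X: "ideal ?X R" by (intro ideal_power_ideal add_ideals A B)
    have "ideal_prod R A ?X \<subseteq> ideal_prod R A (ideal_power R A s' <+>\<^bsub>R\<^esub> ideal_power R B t)"
      using Suc(1)[of s' t] Suc(2) s by (simp add: ideal_prod_mono)
    also have "\<dots> = ideal_power R A s <+>\<^bsub>R\<^esub> ideal_prod R A (ideal_power R B t)"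
      using s by (simp add: ideal_prod_distr(1) A ideal_power_ideal B)
    also have "\<dots> \<subseteq> ?T"
      by (intro set_add_mono order_refl ideal_prod_inter[THEN order_trans] A B ideal_power_ideal)
        auto
    finally have AX: "ideal_prod R A ?X \<subseteq> ?T" .
    have "ideal_prod R B ?X \<subseteq> ideal_prod R B (ideal_power R A s <+>\<^bsub>R\<^esub> ideal_power R B t')"
      using Suc(1)[of s t'] Suc(2) t by (simp add: ideal_prod_mono)
    also have "\<dots> = ideal_prod R B (ideal_power R A s) <+>\<^bsub>R\<^esub> ideal_power R B t"
      using t by (simp add: ideal_prod_distr(1) A ideal_power_ideal B)
    also have "\<dots> \<subseteq> ?T"
      by (intro set_add_mono order_refl ideal_prod_inter[THEN order_trans] A B ideal_power_ideal)
        auto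
    finally have BX: "ideal_prod R B ?X \<subseteq> ?T" .
    have "ideal_power R (A <+>\<^bsub>R\<^esub> B) (s + t) = ideal_prod R A ?X <+>\<^bsub>R\<^esub> ideal_prod R B ?X"
      using Suc(2)[symmetric] by (simp add: ideal_prod_distr(2) A B X)
    also have "\<dots> \<subseteq> ?T"
      by (intro set_add_ideals_subset AX BX T ideal_prod_is_ideal A B X)
    finally show ?thesis .
  qed
qed

lemma ideal_power_cgenideal:
  assumes x: "x \<in> carrier R"
  shows "ideal_power R (PIdl x) m \<subseteq> PIdl (x [^] m)"
proof (induction m)
  case 0
  show ?case
    using genideal_one by (simp add: cgenideal_eq_genideal)
next
  case (Suc m)
  have "ideal_power R (PIdl x) (Suc m) \<subseteq> ideal_prod R (PIdl x) (PIdl (x [^] m))"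
    using Suc by (simp add: ideal_prod_mono)
  also have "\<dots> = Idl (PIdl (x \<otimes> x [^] m))"
    using x by (simp add: ideal_prod_eq_genideal cgenideal_ideal cgenideal_prod)
  also have "\<dots> = Idl (PIdl (x [^] Suc m))"
    using x by (simp only: nat_pow_Suc2)
  also have "\<dots> \<subseteq> PIdl (x [^] Suc m)"
    using x by (intro genideal_minimal cgenideal_ideal) auto
  finally show ?case .
qed

text \<open>Pigeonhole: a product of card G * m + 1 generators contains some generator m times.\<close>
lemma ideal_power_genideal_subset:
  assumes K: "ideal K R" and G: "finite G" "G \<subseteq> carrier R" "\<forall>g\<in>G. g [^] m \<in> K"
  shows "ideal_power R (Idl G) (card G * m + 1) \<subseteq> K"
  using G
proof (induction G rule: finite_induct)
  case empty
  have "Idl {} \<subseteq> K" by (simp add: genideal_minimal K)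
  then show ?case
    using ideal_prod_one[OF genideal_ideal[of "{}"]] by simp
next
  case (insert g G)
  then have g: "g \<in> carrier R" and G: "G \<subseteq> carrier R" by auto
  have PIdl_g: "ideal (PIdl g) R" and Idl_G: "ideal (Idl G) R"
    by (simp_all add: cgenideal_ideal genideal_ideal g G)
  have "Idl (insert g G) \<subseteq> PIdl g <+>\<^bsub>R\<^esub> Idl G"
    using subset_set_add_ideals[OF PIdl_g Idl_G] cgenideal_self[OF g] genideal_self[OF G]
    by (intro genideal_minimal add_ideals PIdl_g Idl_G) auto
  then have "ideal_power R (Idl (insert g G)) (m + (card G * m + 1))
      \<subseteq> ideal_power R (PIdl g <+>\<^bsub>R\<^esub> Idl G) (m + (card G * m + 1))"
    by (rule ideal_power_mono)
  also have "\<dots> \<subseteq> ideal_power R (PIdl g) m <+>\<^bsub>R\<^esub> ideal_power R (Idl G) (card G * m + 1)"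
    by (rule ideal_power_set_add_subset[OF PIdl_g Idl_G])
  also have "\<dots> \<subseteq> K"
  proof (rule set_add_ideals_subset)
    show "ideal_power R (PIdl g) m \<subseteq> K"
      using ideal_power_cgenideal[OF g, of m] cgenideal_minimal[OF K] insert.prems by auto
    show "ideal_power R (Idl G) (card G * m + 1) \<subseteq> K"
      using insert.IH G insert.prems by blast
  qed (simp_all only: ideal_power_ideal PIdl_g Idl_G K)
  finally show ?case
    using insert.hyps by (simp add: add.commute)
qed

end

lemma (in cring) finite_subset_rad_ideal_common_exponent:
  assumes K: "ideal K R" and G: "finite G" "G \<subseteq> rad_ideal R K"
  obtains M :: nat where "\<forall>g\<in>G. g [^] M \<in> K"
proof -
  have "\<forall>g\<in>G. \<exists>n::nat. g [^] n \<in> K"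
    using G(2) unfolding rad_ideal_def by blast
  then obtain n where n: "\<forall>g\<in>G. g [^] (n g :: nat) \<in> K"
    by metis
  have "g [^] (\<Sum>h\<in>G. n h) \<in> K" if g: "g \<in> G" for g
  proof -
    have "n g \<le> (\<Sum>h\<in>G. n h)" using G(1) g by (intro member_le_sum) auto
    moreover have "g \<in> carrier R" using g G(2) unfolding rad_ideal_def by auto
    ultimately have "g [^] (\<Sum>h\<in>G. n h) = g [^] n g \<otimes> g [^] ((\<Sum>h\<in>G. n h) - n g)"
      by (simp add: nat_pow_mult)
    then show ?thesis
      using n g \<open>g \<in> carrier R\<close> ideal.I_r_closed[OF K] by simp
  qed
  then show ?thesis using that by blast
qed

definition b_num_set :: "('a, 'b) ring_scheme \<Rightarrow> nat \<Rightarrow> 'a set \<Rightarrow> 'a set \<Rightarrow> nat \<Rightarrow> nat set" where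
  "b_num_set R p J a e = {t. \<not> ideal_power R a t \<subseteq> frob_ideal R p J e}"

lemma b_num_eq_Max: "b_num R p J a e = Max (b_num_set R p J a e)"
  unfolding b_num_def b_num_set_def ..

locale crit_thr_data = cring R for R (structure) +
  fixes p :: nat and K A G :: "'a set"
  assumes p_pos: "p > 0" and F_pure: "F_pure R p"
    and K: "ideal K R" and one_notin_K: "\<one> \<notin> K"
    and A: "ideal A R" and G: "finite G" "G \<subseteq> rad_ideal R K" and A_subset: "A \<subseteq> Idl G"
begin

lemma ideal_power_subset_frob_ideal:
  obtains C :: nat where "\<And>e. ideal_power R A (C * p ^ e + 1) \<subseteq> frob_ideal R p K e"
proof -
  obtain M :: nat where M: "\<forall>g\<in>G. g [^] M \<in> K"
    using finite_subset_rad_ideal_common_exponent[OF K G] by blast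
  have G_carrier: "G \<subseteq> carrier R" using G(2) unfolding rad_ideal_def by auto
  have "ideal_power R A (card G * M * p ^ e + 1) \<subseteq> frob_ideal R p K e" for e
  proof -
    have "ideal_power R A (card G * M * p ^ e + 1)
        \<subseteq> ideal_power R (Idl G) (card G * (M * p ^ e) + 1)"
      unfolding mult.assoc by (rule ideal_power_mono[OF A_subset])
    also have "\<dots> \<subseteq> frob_ideal R p K e"
      using M G_carrier
      by (intro ideal_power_genideal_subset frob_ideal_ideal K G(1) ballI nat_pow_mult_in_frob_ideal)
        auto
    finally show ?thesis .
  qed
  then show ?thesis using that by blast
qed

lemma zero_in_b_num_set: "0 \<in> b_num_set R p K A e"
  using F_pure_one_notin_frob_ideal[OF F_pure one_notin_K] unfolding b_num_set_def by auto

lemma b_num_set_bounded: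
  obtains C :: nat where "\<And>e. b_num_set R p K A e \<subseteq> {..C * p ^ e}"
proof -
  obtain C where C: "\<And>e. ideal_power R A (C * p ^ e + 1) \<subseteq> frob_ideal R p K e"
    using ideal_power_subset_frob_ideal by blast
  have "b_num_set R p K A e \<subseteq> {..C * p ^ e}" for e
  proof
    fix t assume t: "t \<in> b_num_set R p K A e"
    show "t \<in> {..C * p ^ e}"
    proof (rule ccontr)
      assume "t \<notin> {..C * p ^ e}"
      then have "ideal_power R A t \<subseteq> ideal_power R A (C * p ^ e + 1)"
        by (intro ideal_power_antimono A) auto
      with C t show False unfolding b_num_set_def by blast
    qed
  qed
  then show ?thesis using that by blast
qed

lemma finite_b_num_set: "finite (b_num_set R p K A e)"
proof -
  obtain C where "\<And>e. b_num_set R p K A e \<subseteq> {..C * p ^ e}"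
    using b_num_set_bounded by blast
  then show ?thesis using finite_subset by blast
qed

lemma b_num_in_b_num_set: "b_num R p K A e \<in> b_num_set R p K A e"
  unfolding b_num_eq_Max using finite_b_num_set zero_in_b_num_set by (intro Max_in) auto

lemma mult_b_num_le_b_num_Suc: "p * b_num R p K A e \<le> b_num R p K A (Suc e)"
proof -
  obtain f where f: "f \<in> ideal_power R A (b_num R p K A e)" "f \<notin> frob_ideal R p K e"
    using b_num_in_b_num_set unfolding b_num_set_def by auto
  have "f \<in> carrier R" using f(1) ideal.Icarr[OF ideal_power_ideal[OF A]] by blast
  have "f [^] p \<in> ideal_power R A (p * b_num R p K A e)"
    by (rule nat_pow_in_ideal_power[OF A f(1)])
  moreover have "f [^] p \<notin> frob_ideal R p K (Suc e)"
    by (rule F_pure_nat_pow_notin_frob_ideal[OF F_pure \<open>f \<in> carrier R\<close> f(2)])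
  ultimately have "p * b_num R p K A e \<in> b_num_set R p K A (Suc e)"
    unfolding b_num_set_def by auto
  then show ?thesis
    unfolding b_num_eq_Max[of R p K A "Suc e"] using finite_b_num_set by (rule Max_ge[rotated])
qed

lemma convergent_b_num: "convergent (\<lambda>e. real (b_num R p K A e) / real p ^ e)"
proof -
  obtain C where C: "\<And>e. b_num_set R p K A e \<subseteq> {..C * p ^ e}"
    using b_num_set_bounded by blast
  have "incseq (\<lambda>e. real (b_num R p K A e) / real p ^ e)"
  proof (rule incseq_SucI)
    fix e
    have "real (b_num R p K A e) / real p ^ e
        = real p * real (b_num R p K A e) / (real p * real p ^ e)"
      using p_pos by simp
    also have "\<dots> \<le> real (b_num R p K A (Suc e)) / (real p * real p ^ e)"
      by (rule divide_right_mono) (use of_nat_mono[OF mult_b_num_le_b_num_Suc[of e]] in simp_all)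
    finally show "real (b_num R p K A e) / real p ^ e \<le> real (b_num R p K A (Suc e)) / real p ^ Suc e"
      by simp
  qed
  moreover have "bdd_above (range (\<lambda>e. real (b_num R p K A e) / real p ^ e))"
  proof (rule bdd_aboveI2)
    fix e
    have "real (b_num R p K A e) \<le> real (C * p ^ e)"
      using b_num_in_b_num_set C by (meson atMost_iff of_nat_mono subsetD)
    then show "real (b_num R p K A e) / real p ^ e \<le> real C"
      using p_pos by (simp add: divide_le_eq)
  qed
  ultimately show ?thesis
    using LIMSEQ_incseq_SUP convergent_def by blast
qed

end

lemma (in ring_hom_ring) rad_ideal_image_subset: "h ` rad_ideal R J \<subseteq> rad_ideal S (h ` J)"
proof (rule image_subsetI)
  fix x assume "x \<in> rad_ideal R J"
  then obtain n :: nat where "x \<in> carrier R" "x [^] n \<in> J"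
    unfolding rad_ideal_def by blast
  then show "h x \<in> rad_ideal S (h ` J)"
    unfolding rad_ideal_def using hom_nat_pow[of x n] ring_hom_closed[OF homh] by force
qed

lemma (in ring_hom_ring) genideal_image_subset:
  assumes "G \<subseteq> carrier R"
  shows "h ` (Idl G) \<subseteq> Idl\<^bsub>S\<^esub> (h ` G)"
proof -
  have hG: "h ` G \<subseteq> carrier S"
    using assms ring_hom_closed[OF homh] by auto
  then have "ideal (Idl\<^bsub>S\<^esub> (h ` G)) S"
    by (rule S.genideal_ideal)
  moreover have "G \<subseteq> {r \<in> carrier R. h r \<in> Idl\<^bsub>S\<^esub> (h ` G)}"
    using assms S.genideal_self[OF hG] by auto
  ultimately have "Idl G \<subseteq> {r \<in> carrier R. h r \<in> Idl\<^bsub>S\<^esub> (h ` G)}"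
    by (rule R.genideal_minimal[OF ideal_vimage])
  then show ?thesis by auto
qed

lemma carrier_FactRing: "carrier (R Quot P) = (\<lambda>x. P +>\<^bsub>R\<^esub> x) ` carrier R"
  unfolding FactRing_def A_RCOSETS_def' by auto

lemma (in ring) rcos_in_quot_image_iff:
  assumes "ideal P R" "ideal J R" "P \<subseteq> J" "y \<in> carrier R"
  shows "P +> y \<in> quot_image R P J \<longleftrightarrow> y \<in> J"
proof
  interpret P: ideal P R by fact
  interpret J: ideal J R by fact
  assume "P +> y \<in> quot_image R P J"
  then obtain j where j: "j \<in> J" "P +> y = P +> j"
    unfolding quot_image_def by blast
  then have "y \<in> P +> j"
    using P.a_rcos_self[OF assms(4)] by simp
  then obtain h where "h \<in> P" "y = h \<oplus> j"
    unfolding a_r_coset_def' by blast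
  then show "y \<in> J"
    using assms(3) j(1) J.a_closed by blast
qed (simp add: quot_image_def)

(* The map induced by phi on R Quot P; it is well defined on cosets once phi maps P into P. *)
definition quot_fun :: "('a, 'b) ring_scheme \<Rightarrow> 'a set \<Rightarrow> ('a \<Rightarrow> 'a) \<Rightarrow> 'a set \<Rightarrow> 'a set" where
  "quot_fun R P \<phi> U = P +>\<^bsub>R\<^esub> \<phi> (SOME x. x \<in> U)"

context ring
begin

lemma quot_fun_rcos:
  assumes P: "ideal P R" and \<phi>: "frob_linear R p e \<phi>" "\<phi> ` P \<subseteq> P" and x: "x \<in> carrier R"
  shows "quot_fun R P \<phi> (P +> x) = P +> \<phi> x"
proof -
  interpret P: ideal P R by fact
  define y where "y = (SOME y. y \<in> P +> x)"
  have "y \<in> P +> x"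
    unfolding y_def using P.a_rcos_self[OF x] by (rule someI)
  then obtain h where h: "h \<in> P" "y = h \<oplus> x"
    unfolding a_r_coset_def' by blast
  then have "\<phi> y = \<phi> h \<oplus> \<phi> x"
    using x P.Icarr frob_linear_add[OF \<phi>(1)] by simp
  then have "\<phi> y \<in> P +> \<phi> x"
    using \<phi>(2) h(1) unfolding a_r_coset_def' by blast
  then show ?thesis
    unfolding quot_fun_def y_def[symmetric]
    using a_repr_independence[OF _ frob_linear_closed[OF \<phi>(1) x] P.a_subgroup] by simp
qed

lemma frob_linear_quot_fun:
  assumes P: "ideal P R" and \<phi>: "frob_linear R p e \<phi>" "\<phi> ` P \<subseteq> P"
  shows "frob_linear (R Quot P) p e (quot_fun R P \<phi>)"
proof -
  interpret P: ideal P R by fact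
  have hom: "(+>) P \<in> ring_hom R (R Quot P)" by (rule P.rcos_ring_hom)
  note quot_fun = quot_fun_rcos[OF P \<phi>]
  note closed = frob_linear_closed[OF \<phi>(1)]
  show ?thesis unfolding frob_linear_def
  proof (intro conjI ballI)
    show "quot_fun R P \<phi> \<in> carrier (R Quot P) \<rightarrow> carrier (R Quot P)"
      using quot_fun closed by (auto simp: carrier_FactRing)
  next
    fix U V assume "U \<in> carrier (R Quot P)" "V \<in> carrier (R Quot P)"
    then obtain x y where x: "x \<in> carrier R" "U = P +> x" and y: "y \<in> carrier R" "V = P +> y"
      by (auto simp: carrier_FactRing)
    have "quot_fun R P \<phi> (U \<oplus>\<^bsub>R Quot P\<^esub> V) = P +> \<phi> (x \<oplus> y)"
      using x y quot_fun by (simp add: ring_hom_add[OF hom, symmetric])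
    also have "\<dots> = quot_fun R P \<phi> U \<oplus>\<^bsub>R Quot P\<^esub> quot_fun R P \<phi> V"
      using x y quot_fun closed by (simp add: frob_linear_add[OF \<phi>(1)] ring_hom_add[OF hom])
    finally show "quot_fun R P \<phi> (U \<oplus>\<^bsub>R Quot P\<^esub> V)
        = quot_fun R P \<phi> U \<oplus>\<^bsub>R Quot P\<^esub> quot_fun R P \<phi> V" .
  next
    fix U V assume "U \<in> carrier (R Quot P)" "V \<in> carrier (R Quot P)"
    then obtain x y where x: "x \<in> carrier R" "U = P +> x" and y: "y \<in> carrier R" "V = P +> y"
      by (auto simp: carrier_FactRing)
    have "U [^]\<^bsub>R Quot P\<^esub> (p ^ e) \<otimes>\<^bsub>R Quot P\<^esub> V = P +> (x [^] (p ^ e) \<otimes> y)"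
      using x y ring_hom_ring.hom_nat_pow[OF P.rcos_ring_hom_ring]
      by (simp add: ring_hom_mult[OF hom])
    then have "quot_fun R P \<phi> (U [^]\<^bsub>R Quot P\<^esub> (p ^ e) \<otimes>\<^bsub>R Quot P\<^esub> V) = P +> (x \<otimes> \<phi> y)"
      using x y quot_fun by (simp add: frob_linear_smult[OF \<phi>(1)])
    also have "\<dots> = U \<otimes>\<^bsub>R Quot P\<^esub> quot_fun R P \<phi> V"
      using x y quot_fun closed by (simp add: ring_hom_mult[OF hom])
    finally show "quot_fun R P \<phi> (U [^]\<^bsub>R Quot P\<^esub> (p ^ e) \<otimes>\<^bsub>R Quot P\<^esub> V)
        = U \<otimes>\<^bsub>R Quot P\<^esub> quot_fun R P \<phi> V" .
  qed
qed

lemma F_pure_FactRing: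
  assumes "F_pure R p" "ideal P R" "\<And>\<phi>. frob_linear R p 1 \<phi> \<Longrightarrow> \<phi> ` P \<subseteq> P"
  shows "F_pure (R Quot P) p"
proof -
  obtain \<psi> where \<psi>: "frob_linear R p 1 \<psi>" "\<psi> \<one> = \<one>"
    using assms(1) unfolding F_pure_def by blast
  have "quot_fun R P \<psi> \<one>\<^bsub>R Quot P\<^esub> = \<one>\<^bsub>R Quot P\<^esub>"
    using quot_fun_rcos[OF assms(2) \<psi>(1) assms(3)[OF \<psi>(1)]] \<psi>(2) by (simp add: FactRing_def)
  then show ?thesis
    unfolding F_pure_def using frob_linear_quot_fun[OF assms(2) \<psi>(1) assms(3)[OF \<psi>(1)]] by blast
qed

lemma rcos_notin_frob_ideal_FactRing:
  assumes P: "ideal P R" "P \<subseteq> J" "\<And>\<phi>. frob_linear R p e \<phi> \<Longrightarrow> \<phi> ` P \<subseteq> P"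
    and J: "ideal J R" and f: "f \<in> carrier R" "f \<notin> frob_ideal R p J e"
  shows "P +> f \<notin> frob_ideal (R Quot P) p (quot_image R P J) e"
proof
  obtain \<phi> where \<phi>: "frob_linear R p e \<phi>" "\<phi> f \<notin> J"
    using f unfolding frob_ideal_def by auto
  assume "P +> f \<in> frob_ideal (R Quot P) p (quot_image R P J) e"
  then have "quot_fun R P \<phi> (P +> f) \<in> quot_image R P J"
    using frob_linear_quot_fun[OF P(1) \<phi>(1) P(3)[OF \<phi>(1)]] unfolding frob_ideal_def by blast
  then have "\<phi> f \<in> J"
    using quot_fun_rcos[OF P(1) \<phi>(1) P(3)[OF \<phi>(1)] f(1)] frob_linear_closed[OF \<phi>(1) f(1)]
      rcos_in_quot_image_iff[OF P(1) J P(2)] by simp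
  with \<phi>(2) show False by contradiction
qed

end

context cring
begin

lemma subset_rad_ideal:
  assumes "J \<subseteq> carrier R"
  shows "J \<subseteq> rad_ideal R J"
proof
  fix x assume "x \<in> J"
  then have "x \<in> carrier R" "x [^] (1::nat) \<in> J" using assms by auto
  then show "x \<in> rad_ideal R J" unfolding rad_ideal_def by blast
qed

lemma cartier_core_ideal:
  assumes "ideal J R"
  shows "ideal (cartier_core R p J) R"
  unfolding cartier_core_def by (rule i_Intersect) (use frob_ideal_ideal[OF assms] in auto)

lemma cartier_core_subset: "cartier_core R p J \<subseteq> J"
  using frob_ideal_zero_subset unfolding cartier_core_def by blast

lemma frob_linear_image_cartier_core:
  assumes \<phi>: "frob_linear R p e \<phi>"
  shows "\<phi> ` cartier_core R p J \<subseteq> cartier_core R p J"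
proof (rule image_subsetI)
  fix f assume "f \<in> cartier_core R p J"
  then have f: "f \<in> carrier R" "\<And>s. f \<in> frob_ideal R p J s"
    unfolding cartier_core_def frob_ideal_def by auto
  have "\<phi> f \<in> frob_ideal R p J s" for s
  proof -
    have "\<chi> (\<phi> f) \<in> J" if \<chi>: "frob_linear R p s \<chi>" for \<chi>
    proof -
      have "frob_linear R p (e + s) (\<chi> \<circ> \<phi>)" by (rule frob_linear_comp[OF \<chi> \<phi>])
      then have "(\<chi> \<circ> \<phi>) f \<in> J"
        using f(2)[of "e + s"] unfolding frob_ideal_def by blast
      then show ?thesis by simp
    qed
    then show ?thesis
      unfolding frob_ideal_def using frob_linear_closed[OF \<phi> f(1)] by blast
  qed
  then show "\<phi> f \<in> cartier_core R p J"
    unfolding cartier_core_def by blast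
qed

lemma b_num_le_b_num_FactRing:
  assumes P: "ideal P R" "P \<subseteq> J" "\<And>e \<phi>. frob_linear R p e \<phi> \<Longrightarrow> \<phi> ` P \<subseteq> P"
    and data: "crit_thr_data R p J a G"
      "crit_thr_data (R Quot P) p (quot_image R P J) (quot_image R P a) G'"
  shows "b_num R p J a e \<le> b_num (R Quot P) p (quot_image R P J) (quot_image R P a) e"
proof -
  have J: "ideal J R" and a: "ideal a R"
    using data(1) by (simp_all add: crit_thr_data_def crit_thr_data_axioms_def)
  have "b_num_set R p J a e \<subseteq> b_num_set (R Quot P) p (quot_image R P J) (quot_image R P a) e"
  proof
    fix t assume "t \<in> b_num_set R p J a e"
    then obtain f where f: "f \<in> ideal_power R a t" "f \<notin> frob_ideal R p J e"
      unfolding b_num_set_def by blast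
    have "f \<in> carrier R"
      using f(1) ideal.Icarr[OF ideal_power_ideal[OF a]] by blast
    have "P +> f \<in> ideal_power (R Quot P) (quot_image R P a) t"
      unfolding quot_image_def
      by (rule ideal_power_ring_hom[OF ring_axioms ideal.rcos_ring_hom[OF P(1)] a f(1)])
    moreover have "P +> f \<notin> frob_ideal (R Quot P) p (quot_image R P J) e"
      by (rule rcos_notin_frob_ideal_FactRing[OF P J \<open>f \<in> carrier R\<close> f(2)])
    ultimately show "t \<in> b_num_set (R Quot P) p (quot_image R P J) (quot_image R P a) e"
      unfolding b_num_set_def by blast
  qed
  then show ?thesis
    unfolding b_num_eq_Max
  proof (rule Max_mono)
    show "b_num_set R p J a e \<noteq> {}"
      using crit_thr_data.zero_in_b_num_set[OF data(1)] by blast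
  qed (rule crit_thr_data.finite_b_num_set[OF data(2)])
qed

lemma crit_thr_data_FactRing:
  assumes P: "ideal P R" "P \<subseteq> J" "\<And>\<phi>. frob_linear R p 1 \<phi> \<Longrightarrow> \<phi> ` P \<subseteq> P"
    and "crit_thr_data R p J a G"
  shows "crit_thr_data (R Quot P) p (quot_image R P J) (quot_image R P a) ((+>) P ` G)"
proof -
  interpret D: crit_thr_data R p J a G by fact
  interpret P: ideal P R by (rule P(1))
  have hom: "ring_hom_ring R (R Quot P) ((+>) P)"
    by (rule P.rcos_ring_hom_ring)
  have G_carrier: "G \<subseteq> carrier R"
    using D.G(2) unfolding rad_ideal_def by auto
  show ?thesis
    unfolding crit_thr_data_def crit_thr_data_axioms_def
  proof (intro conjI)
    show "cring (R Quot P)" by (rule P.quotient_is_cring[OF is_cring])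
    show "F_pure (R Quot P) p" by (rule F_pure_FactRing[OF D.F_pure P(1) P(3)])
    show "ideal (quot_image R P J) (R Quot P)" "ideal (quot_image R P a) (R Quot P)"
      unfolding quot_image_def by (simp_all add: ring_ideal_imp_quot_ideal P(1) D.K D.A)
    show "\<one>\<^bsub>R Quot P\<^esub> \<notin> quot_image R P J"
      using D.one_notin_K rcos_in_quot_image_iff[OF P(1) D.K P(2)] by (simp add: FactRing_def)
    show "(+>) P ` G \<subseteq> rad_ideal (R Quot P) (quot_image R P J)"
      using D.G(2) ring_hom_ring.rad_ideal_image_subset[OF hom] unfolding quot_image_def by blast
    show "quot_image R P a \<subseteq> Idl\<^bsub>R Quot P\<^esub> ((+>) P ` G)"
      using D.A_subset ring_hom_ring.genideal_image_subset[OF hom G_carrier]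
      unfolding quot_image_def by blast
  qed (use D.p_pos D.G in simp_all)
qed

lemma crit_thr_le_crit_thr_FactRing:
  assumes P: "ideal P R" "P \<subseteq> J" "\<And>e \<phi>. frob_linear R p e \<phi> \<Longrightarrow> \<phi> ` P \<subseteq> P"
    and p: "p > 0" "F_pure R p"
    and J: "ideal J R" and a: "ideal a R"
    and G: "finite G" "G \<subseteq> rad_ideal R J" "a \<subseteq> Idl G"
  shows "crit_thr R p J a \<le> crit_thr (R Quot P) p (quot_image R P J) (quot_image R P a)"
proof (cases "J = carrier R")
  case True
  have Jq: "quot_image R P J = carrier (R Quot P)"
    unfolding True quot_image_def carrier_FactRing ..
  have aq: "ideal (quot_image R P a) (R Quot P)"
    unfolding quot_image_def by (rule ring_ideal_imp_quot_ideal[OF P(1) a])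
  have "b_num_set R p J a e = {}" for e
    unfolding b_num_set_def True frob_ideal_carrier
    using ideal.Icarr[OF ideal_power_ideal[OF a]] by auto
  moreover have "b_num_set (R Quot P) p (quot_image R P J) (quot_image R P a) e = {}" for e
    unfolding b_num_set_def Jq frob_ideal_carrier
    using ideal.Icarr[OF cring.ideal_power_ideal[OF ideal.quotient_is_cring[OF P(1) is_cring] aq]]
    by auto
  ultimately show ?thesis unfolding crit_thr_def b_num_eq_Max by simp
next
  case False
  have "\<one> \<notin> J" using False ideal.one_imp_carrier[OF J] by blast
  then have R_data: "crit_thr_data R p J a G"
    using is_cring p J a G by (simp add: crit_thr_data_def crit_thr_data_axioms_def)
  have Rq_data: "crit_thr_data (R Quot P) p (quot_image R P J) (quot_image R P a) ((+>) P ` G)"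
    using crit_thr_data_FactRing[OF P(1,2) P(3) R_data] .
  show ?thesis
    unfolding crit_thr_def
  proof (rule lim_mono)
    show "real (b_num R p J a e) / real p ^ e
        \<le> real (b_num (R Quot P) p (quot_image R P J) (quot_image R P a) e) / real p ^ e" for e
      using b_num_le_b_num_FactRing[OF P R_data Rq_data] by (simp add: divide_right_mono)
    show "(\<lambda>e. real (b_num R p J a e) / real p ^ e) \<longlonglongrightarrow> lim (\<lambda>e. real (b_num R p J a e) / real p ^ e)"
      using crit_thr_data.convergent_b_num[OF R_data] by (simp add: convergent_LIMSEQ_iff)
    show "(\<lambda>e. real (b_num (R Quot P) p (quot_image R P J) (quot_image R P a) e) / real p ^ e)
        \<longlonglongrightarrow> lim (\<lambda>e. real (b_num (R Quot P) p (quot_image R P J) (quot_image R P a) e) / real p ^ e)"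
      using crit_thr_data.convergent_b_num[OF Rq_data] by (simp add: convergent_LIMSEQ_iff)
  qed
qed

end

theorem mainTheorem16:
  fixes R :: "('a, 'b) ring_scheme" and p :: nat and a J :: "'a set"
  assumes "cring R" and "noetherian_ring R"
    and "Factorial_Ring.prime p" and "add_pow R p \<one>\<^bsub>R\<^esub> = \<zero>\<^bsub>R\<^esub>"
    and "F_finite R p" and "F_pure R p"
    and "ideal a R" and "ideal J R" and "a \<subseteq> rad_ideal R J"
  shows "(crit_thr R p J a
           \<le> crit_thr (R Quot (cartier_core R p J)) p
                (quot_image R (cartier_core R p J) J)
                (quot_image R (cartier_core R p J) a))
         \<and> (\<forall>m. maximalideal m R \<and> (\<forall>I. maximalideal I R \<longrightarrow> I = m) \<and> a \<subseteq> m \<longrightarrow>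
           fpt R p m a
           \<le> fpt (R Quot (cartier_core R p m)) p
                (quot_image R (cartier_core R p m) m)
                (quot_image R (cartier_core R p m) a))"
proof -
  interpret cring R by fact
  obtain G where G: "G \<subseteq> carrier R" "finite G" "a = Idl\<^bsub>R\<^esub> G"
    using noetherian_ring.finetely_gen[OF assms(2,7)] by blast
  have crit_thr_le: "crit_thr R p K a \<le> crit_thr (R Quot (cartier_core R p K)) p
      (quot_image R (cartier_core R p K) K) (quot_image R (cartier_core R p K) a)"
    if K: "ideal K R" "a \<subseteq> rad_ideal R K" for K
    using G genideal_self[OF G(1)] K(2)
    by (intro crit_thr_le_crit_thr_FactRing[OF cartier_core_ideal[OF K(1)] cartier_core_subset
        frob_linear_image_cartier_core prime_gt_0_nat[OF assms(3)] assms(6) K(1) assms(7) G(2)]) auto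
  show ?thesis
  proof (intro conjI allI impI)
    show "crit_thr R p J a \<le> crit_thr (R Quot (cartier_core R p J)) p
        (quot_image R (cartier_core R p J) J) (quot_image R (cartier_core R p J) a)"
      by (rule crit_thr_le[OF assms(8,9)])
  next
    fix m assume m: "maximalideal m R \<and> (\<forall>I. maximalideal I R \<longrightarrow> I = m) \<and> a \<subseteq> m"
    then have "ideal m R" by (simp add: maximalideal.axioms(1))
    moreover have "a \<subseteq> rad_ideal R m"
      using m subset_rad_ideal[of m] ideal.Icarr[OF \<open>ideal m R\<close>] by blast
    ultimately show "fpt R p m a \<le> fpt (R Quot (cartier_core R p m)) p
        (quot_image R (cartier_core R p m) m) (quot_image R (cartier_core R p m) a)"
      unfolding fpt_def by (rule crit_thr_le)
  qed
qed

end
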